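(* The relation algebra $30_{65}$ has a representation on a finite set.
   Context: $30_{65}$ is the finite symmetric integral relation algebra with atoms $1',a,b,c$ whose mandatory diversity cycle types are exactly $aaa, ccc, abb, baa, caa, abc$ (so $bbb, acc, bcc, cbb$ are forbidden); a cycle type is the multiset of colors of the sides of a triangle, e.g. $baa$ = one side $b$, two sides $a$. A representation on a set $X$ is a coloring of all 2-element subsets of $X$ by $a,b,c$, each color used, such that: for every mandatory type $\{h,i,j\}$, every edge $\{x,y\}$ colored $h$ (for each choice of $h$ among the three colors of the type) and each ordering $(i,j)$ of the remaining two colors, some $z$ has $\{x,z\}$ colored $i$ and $\{z,y\}$ colored $j$; and no triangle of a forbidden type occurs. *)

theory Defs
  imports Main "HOL-Library.Multiset"
begin

text \<open>Diversity atoms of the relation algebra 30_65.\<close>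
datatype color = Ca | Cb | Cc

definition mandatory_30_65 :: "color multiset set" where
  "mandatory_30_65 = {{#Ca,Ca,Ca#}, {#Cc,Cc,Cc#}, {#Ca,Cb,Cb#}, {#Cb,Ca,Ca#},
                      {#Cc,Ca,Ca#}, {#Ca,Cb,Cc#}}"

definition forbidden_30_65 :: "color multiset set" where
  "forbidden_30_65 = {{#Cb,Cb,Cb#}, {#Ca,Cc,Cc#}, {#Cb,Cc,Cc#}, {#Cc,Cb,Cb#}}"

text \<open>A representation on X: a coloring of the 2-element subsets of X
  (given as a symmetric function on distinct pairs) by a, b, c.\<close>
definition is_representation_30_65 :: "'x set \<Rightarrow> ('x \<Rightarrow> 'x \<Rightarrow> color) \<Rightarrow> bool" where
  "is_representation_30_65 X col \<longleftrightarrow>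
     (\<forall>x\<in>X. \<forall>y\<in>X. x \<noteq> y \<longrightarrow> col x y = col y x)
   \<and> (\<forall>k. \<exists>x\<in>X. \<exists>y\<in>X. x \<noteq> y \<and> col x y = k)
   \<and> (\<forall>h i j. {#h,i,j#} \<in> mandatory_30_65 \<longrightarrow>
        (\<forall>x\<in>X. \<forall>y\<in>X. x \<noteq> y \<and> col x y = h \<longrightarrow>
           (\<exists>z\<in>X. z \<noteq> x \<and> z \<noteq> y \<and> col x z = i \<and> col z y = j)))
   \<and> (\<forall>x\<in>X. \<forall>y\<in>X. \<forall>z\<in>X. x \<noteq> y \<and> y \<noteq> z \<and> x \<noteq> z \<longrightarrow>
        {#col x y, col y z, col x z#} \<notin> forbidden_30_65)"

end

theory Submission
  imports Defs
begin

(* Take X = Z/65 and colour an edge {x, y} by the residue y - x: multiples of 13 get c, the twelve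
   residues +-3, +-11, +-12, +-17, +-19, +-21 get b, all other residues get a. Since the colouring is
   invariant under translation and every colour class is closed under negation, each condition of a
   representation becomes a condition on residues: a triangle x, y, z has sides d = y - x, e = z - y
   and d + e, and a point z completing an edge of length d is a splitting d = e + (d - e). These
   finitely many conditions on residues are checked by evaluation. *)

definition cyclic_diff :: "nat \<Rightarrow> nat \<Rightarrow> nat \<Rightarrow> nat" where
  "cyclic_diff n x y = (y + n - x) mod n"

definition cyclic_coloring :: "nat \<Rightarrow> (nat \<Rightarrow> 'c) \<Rightarrow> nat \<Rightarrow> nat \<Rightarrow> 'c" where
  "cyclic_coloring n f x y = f (cyclic_diff n x y)"

lemma cyclic_diff_eq:
  assumes "x < n" "y < n"
  shows "cyclic_diff n x y = (if x \<le> y then y - x else y + n - x)"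
  using assms by (simp add: cyclic_diff_def mod_if)

lemma cyclic_diff_less: "x < n \<Longrightarrow> y < n \<Longrightarrow> cyclic_diff n x y < n"
  by (auto simp: cyclic_diff_eq)

lemma cyclic_diff_pos: "x < n \<Longrightarrow> y < n \<Longrightarrow> x \<noteq> y \<Longrightarrow> 0 < cyclic_diff n x y"
  by (auto simp: cyclic_diff_eq)

lemma cyclic_diff_self: "cyclic_diff n x x = 0"
  by (simp add: cyclic_diff_def)

lemma cyclic_diff_swap:
  "x < n \<Longrightarrow> y < n \<Longrightarrow> x \<noteq> y \<Longrightarrow> cyclic_diff n y x = n - cyclic_diff n x y"
  by (auto simp: cyclic_diff_eq)

lemma cyclic_diff_add:
  "x < n \<Longrightarrow> y < n \<Longrightarrow> z < n \<Longrightarrow>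
    cyclic_diff n x z = (cyclic_diff n x y + cyclic_diff n y z) mod n"
  by (auto simp: cyclic_diff_eq mod_if)

lemma cyclic_diff_shift_right:
  "x < n \<Longrightarrow> e < n \<Longrightarrow> cyclic_diff n x ((x + e) mod n) = e"
  by (auto simp: cyclic_diff_eq mod_if)

lemma cyclic_diff_shift_left:
  "x < n \<Longrightarrow> y < n \<Longrightarrow> e < n \<Longrightarrow>
    cyclic_diff n ((x + e) mod n) y = (cyclic_diff n x y + n - e) mod n"
  by (auto simp: cyclic_diff_eq mod_if)

lemma cyclic_coloring_swap:
  assumes symmetric: "\<And>d. 0 < d \<Longrightarrow> d < n \<Longrightarrow> f (n - d) = f d"
    and "x < n" "y < n" "x \<noteq> y"
  shows "cyclic_coloring n f y x = cyclic_coloring n f x y"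
proof -
  have "0 < cyclic_diff n x y" "cyclic_diff n x y < n"
    and "cyclic_diff n y x = n - cyclic_diff n x y"
    using assms(2-4) by (auto intro: cyclic_diff_pos cyclic_diff_less cyclic_diff_swap)
  then show ?thesis
    by (simp add: cyclic_coloring_def symmetric)
qed

lemma cyclic_coloring_triangle:
  assumes "x < n" "y < n" "z < n" "x \<noteq> y" "y \<noteq> z" "x \<noteq> z"
  obtains d e where "0 < d" "d < n" "0 < e" "e < n" "d + e \<noteq> n"
    and "cyclic_coloring n f x y = f d" "cyclic_coloring n f y z = f e"
    and "cyclic_coloring n f x z = f ((d + e) mod n)"
proof
  have sum: "cyclic_diff n x z = (cyclic_diff n x y + cyclic_diff n y z) mod n"
    using assms(1-3) by (rule cyclic_diff_add)
  then show "cyclic_diff n x y + cyclic_diff n y z \<noteq> n"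
    using cyclic_diff_pos[of x n z] assms by auto
  show "cyclic_coloring n f x z = f ((cyclic_diff n x y + cyclic_diff n y z) mod n)"
    by (simp add: cyclic_coloring_def sum)
qed (use assms in \<open>simp_all add: cyclic_coloring_def cyclic_diff_pos cyclic_diff_less\<close>)

lemma cyclic_coloring_split_edge:
  assumes "x < n" "y < n" "0 < e" "e < n" "e \<noteq> cyclic_diff n x y"
  obtains z where "z < n" "z \<noteq> x" "z \<noteq> y" "cyclic_coloring n f x z = f e"
    and "cyclic_coloring n f z y = f ((cyclic_diff n x y + n - e) mod n)"
proof
  let ?z = "(x + e) mod n"
  have xz: "cyclic_diff n x ?z = e"
    using assms by (simp add: cyclic_diff_shift_right)
  show "?z < n"
    using assms by simp
  show "?z \<noteq> x"
    using xz assms by (auto simp: cyclic_diff_self)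
  show "?z \<noteq> y"
    using xz assms by auto
  show "cyclic_coloring n f x ?z = f e"
    using xz by (simp add: cyclic_coloring_def)
  show "cyclic_coloring n f ?z y = f ((cyclic_diff n x y + n - e) mod n)"
    using assms by (simp add: cyclic_coloring_def cyclic_diff_shift_left)
qed

lemma is_representation_cyclic_coloring:
  assumes symmetric: "\<And>d. 0 < d \<Longrightarrow> d < n \<Longrightarrow> f (n - d) = f d"
    and colors_used: "\<And>k. \<exists>d. 0 < d \<and> d < n \<and> f d = k"
    and mandatory: "\<And>d i j. 0 < d \<Longrightarrow> d < n \<Longrightarrow> {#f d, i, j#} \<in> mandatory_30_65 \<Longrightarrow>
      \<exists>e. 0 < e \<and> e < n \<and> e \<noteq> d \<and> f e = i \<and> f ((d + n - e) mod n) = j"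
    and forbidden: "\<And>d e. 0 < d \<Longrightarrow> d < n \<Longrightarrow> 0 < e \<Longrightarrow> e < n \<Longrightarrow> d + e \<noteq> n \<Longrightarrow>
      {#f d, f e, f ((d + e) mod n)#} \<notin> forbidden_30_65"
  shows "is_representation_30_65 {..<n} (cyclic_coloring n f)"
  unfolding is_representation_30_65_def
proof (intro conjI ballI allI impI)
  fix x y assume "x \<in> {..<n}" "y \<in> {..<n}" "x \<noteq> y"
  then show "cyclic_coloring n f x y = cyclic_coloring n f y x"
    using cyclic_coloring_swap[where n = n and f = f, OF symmetric] by simp
next
  fix k
  obtain d where "0 < d" "d < n" "f d = k"
    using colors_used by blast
  then show "\<exists>x\<in>{..<n}. \<exists>y\<in>{..<n}. x \<noteq> y \<and> cyclic_coloring n f x y = k"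
    by (intro bexI[of _ 0] bexI[of _ d]) (simp_all add: cyclic_coloring_def cyclic_diff_def)
next
  fix h i j x y
  assume "{#h, i, j#} \<in> mandatory_30_65" "x \<in> {..<n}" "y \<in> {..<n}"
    and edge: "x \<noteq> y \<and> cyclic_coloring n f x y = h"
  then have x: "x < n" and y: "y < n" and "{#f (cyclic_diff n x y), i, j#} \<in> mandatory_30_65"
    by (auto simp: cyclic_coloring_def)
  moreover have "0 < cyclic_diff n x y" "cyclic_diff n x y < n"
    using x y edge by (simp_all add: cyclic_diff_pos cyclic_diff_less)
  ultimately obtain e where "0 < e" "e < n" "e \<noteq> cyclic_diff n x y" "f e = i"
    and "f ((cyclic_diff n x y + n - e) mod n) = j"
    using mandatory by blast
  then show "\<exists>z\<in>{..<n}. z \<noteq> x \<and> z \<noteq> y \<and> cyclic_coloring n f x z = i \<and> cyclic_coloring n f z y = j"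
    using cyclic_coloring_split_edge[OF x y] by (metis lessThan_iff)
next
  fix x y z
  assume "x \<in> {..<n}" "y \<in> {..<n}" "z \<in> {..<n}" "x \<noteq> y \<and> y \<noteq> z \<and> x \<noteq> z"
  then obtain d e where "0 < d" "d < n" "0 < e" "e < n" "d + e \<noteq> n"
    and "cyclic_coloring n f x y = f d" "cyclic_coloring n f y z = f e"
    and "cyclic_coloring n f x z = f ((d + e) mod n)"
    using cyclic_coloring_triangle[of x n y z f] by auto
  then show "{#cyclic_coloring n f x y, cyclic_coloring n f y z, cyclic_coloring n f x z#} \<notin> forbidden_30_65"
    using forbidden by simp
qed

lemma all_color_eq: "(\<forall>k. P k) \<longleftrightarrow> P Ca \<and> P Cb \<and> P Cc"
  by (auto intro: color.induct)

lemma forbidden_30_65_iff: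
  "{#p, q, r#} \<in> forbidden_30_65 \<longleftrightarrow>
     (Ca \<notin> {p, q, r} \<and> Cb \<in> {p, q, r}) \<or> (count {#p, q, r#} Ca = 1 \<and> Cb \<notin> {p, q, r})"
  by (cases p; cases q; cases r) (simp_all add: forbidden_30_65_def add_mset_commute add_eq_conv_diff)

lemma mandatory_30_65_iff_not_forbidden:
  "{#p, q, r#} \<in> mandatory_30_65 \<longleftrightarrow> {#p, q, r#} \<notin> forbidden_30_65"
  by (cases p; cases q; cases r)
    (simp_all add: mandatory_30_65_def forbidden_30_65_def add_mset_commute add_eq_conv_diff)

definition color65 :: "nat \<Rightarrow> color" where
  "color65 d = (if d mod 13 = 0 then Cc
     else if d \<in> {3, 11, 12, 17, 19, 21, 44, 46, 48, 53, 54, 62} then Cb else Ca)"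

(* Evaluating color65 through this table rather than its definition keeps the checks below fast. *)
lemma color65_simps:
  "color65 1 = Ca" "color65 2 = Ca" "color65 3 = Cb" "color65 4 = Ca" "color65 5 = Ca" "color65 6 = Ca"
  "color65 7 = Ca" "color65 8 = Ca" "color65 9 = Ca" "color65 10 = Ca" "color65 11 = Cb" "color65 12 = Cb"
  "color65 13 = Cc" "color65 14 = Ca" "color65 15 = Ca" "color65 16 = Ca" "color65 17 = Cb" "color65 18 = Ca"
  "color65 19 = Cb" "color65 20 = Ca" "color65 21 = Cb" "color65 22 = Ca" "color65 23 = Ca" "color65 24 = Ca"
  "color65 25 = Ca" "color65 26 = Cc" "color65 27 = Ca" "color65 28 = Ca" "color65 29 = Ca" "color65 30 = Ca"
  "color65 31 = Ca" "color65 32 = Ca" "color65 33 = Ca" "color65 34 = Ca" "color65 35 = Ca" "color65 36 = Ca"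
  "color65 37 = Ca" "color65 38 = Ca" "color65 39 = Cc" "color65 40 = Ca" "color65 41 = Ca" "color65 42 = Ca"
  "color65 43 = Ca" "color65 44 = Cb" "color65 45 = Ca" "color65 46 = Cb" "color65 47 = Ca" "color65 48 = Cb"
  "color65 49 = Ca" "color65 50 = Ca" "color65 51 = Ca" "color65 52 = Cc" "color65 53 = Cb" "color65 54 = Cb"
  "color65 55 = Ca" "color65 56 = Ca" "color65 57 = Ca" "color65 58 = Ca" "color65 59 = Ca" "color65 60 = Ca"
  "color65 61 = Ca" "color65 62 = Cb" "color65 63 = Ca" "color65 64 = Ca"
  by (simp_all add: color65_def)

(* In the evaluations below One_nat_def is reversed, so that simp unfolds [1..<65] instead of getting
   stuck at [Suc 0..<65]. *)
lemma color65_symmetric: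
  assumes "0 < d" "d < 65"
  shows "color65 (65 - d) = color65 d"
proof -
  have "list_all (\<lambda>d. color65 (65 - d) = color65 d) [1..<65]"
    by (simp add: upt_rec[of 1] color65_simps One_nat_def[symmetric] del: One_nat_def)
  then show ?thesis
    using assms by (simp add: list_all_iff)
qed

lemma color65_colors_used: "\<exists>d. 0 < d \<and> d < 65 \<and> color65 d = k"
proof (cases k)
  case Ca
  then show ?thesis by (intro exI[of _ 1]) (simp add: color65_def)
next
  case Cb
  then show ?thesis by (intro exI[of _ 3]) (simp add: color65_def)
next
  case Cc
  then show ?thesis by (intro exI[of _ 13]) (simp add: color65_def)
qed

lemma color65_mandatory:
  assumes "0 < d" "d < 65" "{#color65 d, i, j#} \<in> mandatory_30_65"
  shows "\<exists>e. 0 < e \<and> e < 65 \<and> e \<noteq> d \<and> color65 e = i \<and> color65 ((d + 65 - e) mod 65) = j"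
proof -
  have "list_all (\<lambda>d. \<forall>i j. {#color65 d, i, j#} \<in> mandatory_30_65 \<longrightarrow>
      list_ex (\<lambda>e. color65 e = i \<and> e \<noteq> d \<and> color65 ((d + 65 - e) mod 65) = j) [1..<65])
    [1..<65]"
    by (simp add: upt_rec[of 1] color65_simps all_color_eq mandatory_30_65_iff_not_forbidden
        forbidden_30_65_iff One_nat_def[symmetric] del: One_nat_def)
  then have "\<forall>d\<in>{1..<65}. \<forall>i j. {#color65 d, i, j#} \<in> mandatory_30_65 \<longrightarrow>
      (\<exists>e\<in>{1..<65}. color65 e = i \<and> e \<noteq> d \<and> color65 ((d + 65 - e) mod 65) = j)"
    by (simp only: list_all_iff list_ex_iff set_upt)
  moreover have "d \<in> {1..<65}"
    using assms by simp
  ultimately obtain e where "e \<in> {1..<65}" "color65 e = i" "e \<noteq> d" "color65 ((d + 65 - e) mod 65) = j"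
    using assms(3) by blast
  then show ?thesis
    by (intro exI[of _ e]) auto
qed

lemma color65_not_forbidden:
  assumes "0 < d" "d < 65" "0 < e" "e < 65" "d + e \<noteq> 65"
  shows "{#color65 d, color65 e, color65 ((d + e) mod 65)#} \<notin> forbidden_30_65"
proof -
  have "list_all (\<lambda>d. list_all (\<lambda>e. d + e = 65 \<or>
      {#color65 d, color65 e, color65 ((d + e) mod 65)#} \<notin> forbidden_30_65) [1..<65]) [1..<65]"
    by (simp add: upt_rec[of 1] color65_simps forbidden_30_65_iff One_nat_def[symmetric] del: One_nat_def)
  then have "\<forall>d\<in>{1..<65}. \<forall>e\<in>{1..<65}. d + e = 65 \<or>
      {#color65 d, color65 e, color65 ((d + e) mod 65)#} \<notin> forbidden_30_65"
    by (simp only: list_all_iff set_upt)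
  moreover have "d \<in> {1..<65}" "e \<in> {1..<65}"
    using assms by simp_all
  ultimately show ?thesis
    using assms(5) by blast
qed

theorem mainTheorem7:
  shows "\<exists>(X :: nat set) col. finite X \<and> is_representation_30_65 X col"
proof -
  have "is_representation_30_65 {..<65} (cyclic_coloring 65 color65)"
    by (rule is_representation_cyclic_coloring[OF color65_symmetric color65_colors_used
        color65_mandatory color65_not_forbidden])
  then show ?thesis
    by blast
qed

end
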